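(* Let $\kappa$ be a regular cardinal. There is a $(\kappa,\kappa^+)$-Borel set $R\subseteq\kappa^\kappa\times\kappa^\kappa$ which is universal for the $\kappa$-Borel sets, i.e. for every $\kappa$-Borel $A\subseteq\kappa^\kappa$ there is $\xi\in\kappa^\kappa$ such that for all $\eta\in\kappa^\kappa$: $\eta\in A$ if and only if $(\eta,\xi)\in R$.
   Context: For $X\subseteq\kappa$ with $|X|<\kappa$ and $\eta:X\to\kappa$, let $N_\eta=\{\zeta\in\kappa^\kappa\mid\eta\subseteq\zeta\}$; these sets and $\emptyset$ are the basic $\kappa$-open subsets of $\kappa^\kappa$, and the basic $\kappa$-open subsets of $\kappa^\kappa\times\kappa^\kappa$ are the products $N_\eta\times N_\xi$ of basic $\kappa$-open sets. For a cardinal $\lambda$, the $(\kappa,\lambda)$-Borel sets form the smallest class containing the basic $\kappa$-open sets and closed under complements, unions of at most $\lambda$ sets and intersections of at most $\lambda$ sets; $\kappa$-Borel means $(\kappa,\kappa)$-Borel. *)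

theory Defs
  imports Main
begin

text \<open>kappa is represented by a cardinal order r on a type 'a with Field r = UNIV,
 so kappa = 'a (as a set) and kappa^kappa = UNIV :: ('a => 'a) set.\<close>

definition basic_opens :: "'a rel \<Rightarrow> ('a \<Rightarrow> 'a) set set" where
  "basic_opens r = insert {}
     {{\<zeta>. \<forall>x\<in>X. \<zeta> x = \<eta> x} | X \<eta>. (card_of X, r) \<in> ordLess}"

definition basic_opens2 :: "'a rel \<Rightarrow> (('a \<Rightarrow> 'a) \<times> ('a \<Rightarrow> 'a)) set set" where
  "basic_opens2 r = {U \<times> V | U V. U \<in> basic_opens r \<and> V \<in> basic_opens r}"

inductive_set borel_gen :: "'x set set \<Rightarrow> 'b rel \<Rightarrow> 'x set set"
  for B :: "'x set set" and lam :: "'b rel" where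
  basic: "A \<in> B \<Longrightarrow> A \<in> borel_gen B lam"
| compl: "A \<in> borel_gen B lam \<Longrightarrow> - A \<in> borel_gen B lam"
| union: "\<forall>A\<in>F. A \<in> borel_gen B lam \<Longrightarrow> (card_of F, lam) \<in> ordLeq \<Longrightarrow> \<Union>F \<in> borel_gen B lam"
| inter: "\<forall>A\<in>F. A \<in> borel_gen B lam \<Longrightarrow> (card_of F, lam) \<in> ordLeq \<Longrightarrow> \<Inter>F \<in> borel_gen B lam"

end

theory Submission
  imports Defs
begin

text \<open>A code \<xi> \<in> \<kappa>^\<kappa> is split by a bijection p : \<kappa> \<times> \<kappa> \<rightarrow> \<kappa> into \<kappa> slices, and a tag
  says whether it codes a complement, a union of \<kappa> sets or a basic open set. Codes refer to
  other codes without any well-founded rank, so the relation is decoded by recursion along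
  \<kappa>^+ instead: stage c reads sub-codes through the liminf of the earlier stages. Every
  stage is (\<kappa>,\<kappa>^+)-Borel, hence so is the liminf R of all stages. By induction, every
  \<kappa>-Borel set A has a code whose section is A at all sufficiently late stages; for a union,
  the \<kappa> thresholds of the pieces are bounded below \<kappa>^+ since \<kappa>^+ is regular. The
  section of R at that code is then A.\<close>

unbundle cardinal_syntax

lemma finite_card_of_ordLess_Cinfinite:
  assumes "Cinfinite r" and "finite A"
  shows "|A| <o r"
  using assms by (intro Cfinite_ordLess_Cinfinite)
    (simp_all add: cfinite_def card_of_card_order_on Field_card_of)

lemma borel_gen_UN:
  assumes "|I| \<le>o lam" and "\<And>i. i \<in> I \<Longrightarrow> S i \<in> borel_gen B lam"
  shows "(\<Union>i\<in>I. S i) \<in> borel_gen B lam"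
  using assms by (intro borel_gen.union) (auto intro: ordLeq_transitive[OF card_of_image])

lemma borel_gen_INT:
  assumes "|I| \<le>o lam" and "\<And>i. i \<in> I \<Longrightarrow> S i \<in> borel_gen B lam"
  shows "(\<Inter>i\<in>I. S i) \<in> borel_gen B lam"
  using assms by (intro borel_gen.inter) (auto intro: ordLeq_transitive[OF card_of_image])

lemma borel_gen_Un:
  assumes "Cinfinite lam" and "S \<in> borel_gen B lam" and "T \<in> borel_gen B lam"
  shows "S \<union> T \<in> borel_gen B lam"
  using assms borel_gen.union[of "{S, T}"]
    ordLess_imp_ordLeq[OF finite_card_of_ordLess_Cinfinite, of lam "{S, T}"] by auto

lemma borel_gen_Int:
  assumes "Cinfinite lam" and "S \<in> borel_gen B lam" and "T \<in> borel_gen B lam"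
  shows "S \<inter> T \<in> borel_gen B lam"
  using assms borel_gen.inter[of "{S, T}"]
    ordLess_imp_ordLeq[OF finite_card_of_ordLess_Cinfinite, of lam "{S, T}"] by auto

lemma borel_gen_vimage:
  assumes "A \<in> borel_gen B lam" and "\<And>C. C \<in> B \<Longrightarrow> g -` C \<in> borel_gen B lam"
  shows "g -` A \<in> borel_gen B lam"
  using assms(1)
proof induction
  case (basic A)
  then show ?case by (rule assms(2))
next
  case (compl A)
  then show ?case by (simp add: vimage_Compl borel_gen.compl)
next
  case (union F)
  have "g -` \<Union>F = (\<Union>A\<in>F. g -` A)" by blast
  with union show ?case by (auto intro: borel_gen_UN)
next
  case (inter F)
  have "g -` \<Inter>F = (\<Inter>A\<in>F. g -` A)" by blast
  with inter show ?case by (auto intro: borel_gen_INT)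
qed

lemma basic_opens_finite:
  assumes "Cinfinite r" and "finite X"
  shows "{\<zeta>. \<forall>x\<in>X. \<zeta> x = \<eta> x} \<in> basic_opens r"
  using finite_card_of_ordLess_Cinfinite[OF assms] unfolding basic_opens_def by blast

lemma basic_opens_UNIV: "Cinfinite r \<Longrightarrow> UNIV \<in> basic_opens r"
  using basic_opens_finite[of r "{}"] by simp

lemma basic_opens_point: "Cinfinite r \<Longrightarrow> {\<zeta>. \<zeta> x = v} \<in> basic_opens r"
  using basic_opens_finite[of r "{x}" "\<lambda>_. v"] by simp

lemma basic_opens_vimage_comp:
  assumes "inj m" and "V \<in> basic_opens r"
  shows "(\<lambda>\<xi>. \<xi> \<circ> m) -` V \<in> basic_opens r"
proof (cases "V = {}")
  case True
  then show ?thesis by (simp add: basic_opens_def)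
next
  case False
  then obtain X \<eta> where V: "V = {\<zeta>. \<forall>x\<in>X. \<zeta> x = \<eta> x}" and X: "|X| <o r"
    using assms(2) by (auto simp: basic_opens_def)
  have "|m ` X| <o r" using X card_of_image ordLeq_ordLess_trans by blast
  moreover have "(\<lambda>\<xi>. \<xi> \<circ> m) -` V = {\<zeta>. \<forall>y\<in>m ` X. \<zeta> y = (\<eta> \<circ> inv m) y}"
    using assms(1) by (auto simp: V)
  ultimately show ?thesis unfolding basic_opens_def by blast
qed

lemma borel_gen_vimage_comp_snd:
  assumes "inj m" and "A \<in> borel_gen (basic_opens2 r) lam"
  shows "map_prod id (\<lambda>\<xi>. \<xi> \<circ> m) -` A \<in> borel_gen (basic_opens2 r) lam"
proof (rule borel_gen_vimage[OF assms(2)])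
  fix C assume "C \<in> basic_opens2 r"
  then obtain U V where C: "C = U \<times> V" and "U \<in> basic_opens r" "V \<in> basic_opens r"
    by (auto simp: basic_opens2_def)
  then have "U \<times> (\<lambda>\<xi>. \<xi> \<circ> m) -` V \<in> basic_opens2 r"
    unfolding basic_opens2_def using basic_opens_vimage_comp[OF assms(1)] by blast
  moreover have "map_prod id (\<lambda>\<xi>. \<xi> \<circ> m) -` C = U \<times> (\<lambda>\<xi>. \<xi> \<circ> m) -` V"
    unfolding C by auto
  ultimately show "map_prod id (\<lambda>\<xi>. \<xi> \<circ> m) -` C \<in> borel_gen (basic_opens2 r) lam"
    by (simp add: borel_gen.basic)
qed

definition liminf_on :: "'i rel \<Rightarrow> 'i set \<Rightarrow> ('i \<Rightarrow> 'x set) \<Rightarrow> 'x set" where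
  "liminf_on s D U = {z. \<exists>b\<in>D. \<forall>d\<in>D. (b, d) \<in> s \<longrightarrow> z \<in> U d}"

lemma liminf_on_cong: "(\<And>d. d \<in> D \<Longrightarrow> U d = V d) \<Longrightarrow> liminf_on s D U = liminf_on s D V"
  by (auto simp: liminf_on_def)

lemma mem_liminf_on_iff_eventually_const:
  assumes "Well_order s" and "D \<subseteq> Field s" and "b \<in> D"
    and "\<And>d. d \<in> D \<Longrightarrow> (b, d) \<in> s \<Longrightarrow> z \<in> U d \<longleftrightarrow> P"
  shows "z \<in> liminf_on s D U \<longleftrightarrow> P"
proof
  assume "z \<in> liminf_on s D U"
  then obtain b' where "b' \<in> D" and b': "\<And>d. d \<in> D \<Longrightarrow> (b', d) \<in> s \<Longrightarrow> z \<in> U d"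
    unfolding liminf_on_def by blast
  have wo: "wo_rel s" using assms(1) by (simp add: wo_rel_def)
  let ?m = "wo_rel.max2 s b b'"
  have "b \<in> Field s" "b' \<in> Field s" using \<open>b' \<in> D\<close> assms(2,3) by blast+
  then have "?m \<in> {b, b'}" "(b, ?m) \<in> s" "(b', ?m) \<in> s"
    using wo_rel.max2_among[OF wo] wo_rel.max2_greater[OF wo] by blast+
  moreover have "?m \<in> D" using \<open>?m \<in> {b, b'}\<close> \<open>b' \<in> D\<close> assms(3) by auto
  ultimately show P using b' assms(4) by blast
next
  assume P
  then show "z \<in> liminf_on s D U"
    unfolding liminf_on_def using assms(3,4) by blast
qed

lemma liminf_on_borel_gen:
  assumes "|D| \<le>o lam" and "\<And>d. d \<in> D \<Longrightarrow> U d \<in> borel_gen B lam"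
  shows "liminf_on s D U \<in> borel_gen B lam"
proof -
  have "liminf_on s D U = (\<Union>b\<in>D. \<Inter>d\<in>{d\<in>D. (b, d) \<in> s}. U d)"
    by (auto simp: liminf_on_def)
  moreover have "|{d\<in>D. (b, d) \<in> s}| \<le>o lam" for b
    by (rule ordLeq_transitive[OF card_of_mono1 assms(1)]) blast
  ultimately show ?thesis
    by (simp only:) (intro borel_gen_UN[OF assms(1)] borel_gen_INT assms(2); simp)
qed

lemma cardSuc_strict_upper_bound:
  assumes "Cinfinite r" and "K \<subseteq> Field (cardSuc r)" and "|K| \<le>o r"
  shows "\<exists>a\<in>Field (cardSuc r). K \<subseteq> underS (cardSuc r) a"
proof -
  let ?s = "cardSuc r"
  have Cinf: "Cinfinite ?s" using assms(1) by (rule Cinfinite_cardSuc)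
  then have wo: "wo_rel ?s" by (simp add: card_order_on_well_order_on wo_rel_def)
  have "|K| <o ?s" using assms(1,3) cardSuc_greater ordLeq_ordLess_trans by blast
  moreover have "cofinal K ?s \<Longrightarrow> |K| =o ?s"
    using regularCard_cardSuc[OF assms(1)] assms(2) unfolding regularCard_def by simp
  ultimately have "\<not> cofinal K ?s" using not_ordLess_ordIso by auto
  then obtain a where a: "a \<in> Field ?s" and not_above: "\<forall>k\<in>K. \<not> (a \<noteq> k \<and> (a, k) \<in> ?s)"
    unfolding cofinal_def by blast
  have below_a: "(k, a) \<in> ?s" if "k \<in> K" for k
  proof (cases "k = a")
    case True
    then show ?thesis using a wo_rel.REFL[OF wo] by (simp add: refl_on_def)
  next
    case False
    moreover have "k \<in> Field ?s" using that assms(2) by blast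
    ultimately show ?thesis using that not_above a wo_rel.TOTALS[OF wo] by metis
  qed
  obtain a' where a': "a' \<in> Field ?s" "a \<noteq> a'" "(a, a') \<in> ?s"
    using infinite_Card_order_limit[of ?s a] Cinf a by (auto simp: cinfinite_def)
  have "underS ?s a \<subseteq> underS ?s a'"
    using underS_incr[OF wo_rel.TRANS[OF wo] wo_rel.ANTISYM[OF wo] a'(3)] .
  moreover have "a \<in> underS ?s a'" using a' by (simp add: underS_I)
  ultimately have "k \<in> underS ?s a'" if "k \<in> K" for k
    using below_a[OF that] underS_I[of k a ?s] by (cases "k = a") blast+
  then have "K \<subseteq> underS ?s a'" by (rule subsetI)
  then show ?thesis using a'(1) by (rule bexI)
qed

locale borel_code =
  fixes r :: "'a rel" and p :: "'a \<times> 'a \<Rightarrow> 'a" and a0 a1 a2 :: 'a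
  assumes Cinfinite_r: "Cinfinite r" and Field_r: "Field r = UNIV" and bij_p: "bij p"
    and distinct: "a0 \<noteq> a1" "a0 \<noteq> a2" "a1 \<noteq> a2"
begin

abbreviation W :: "'a set rel" where "W \<equiv> cardSuc r"

abbreviation borel2 :: "(('a \<Rightarrow> 'a) \<times> ('a \<Rightarrow> 'a)) set set" where
  "borel2 \<equiv> borel_gen (basic_opens2 r) W"

lemma Cinfinite_W: "Cinfinite W"
  using Cinfinite_r by (rule Cinfinite_cardSuc)

lemma Well_order_W: "Well_order W"
  using Cinfinite_W card_order_on_well_order_on by blast

lemma wo_rel_W: "wo_rel W"
  using Well_order_W by (simp add: wo_rel_def)

lemma underS_W_mono: "(b, c) \<in> W \<Longrightarrow> underS W b \<subseteq> underS W c"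
  using Well_order_W by (intro underS_incr) (auto simp: order_on_defs)

lemma card_of_subset_Field_W: "D \<subseteq> Field W \<Longrightarrow> |D| \<le>o W"
  using card_of_mono1 card_of_Field_ordIso[of W] Cinfinite_W ordLeq_ordIso_trans by blast

lemma card_of_UNIV_ordIso_r: "|UNIV :: 'a set| =o r"
  using card_of_Field_ordIso[of r] Cinfinite_r Field_r by simp

lemma card_of_UNIV_W: "|UNIV :: 'a set| \<le>o W"
  using card_of_UNIV_ordIso_r cardSuc_ordLeq[of r] Cinfinite_r ordIso_ordLeq_trans by blast

definition slice :: "('a \<Rightarrow> 'a) \<Rightarrow> 'a \<Rightarrow> 'a \<Rightarrow> 'a" where
  "slice \<xi> i = \<xi> \<circ> (p \<circ> Pair i)"

definition glue :: "('a \<Rightarrow> 'a \<Rightarrow> 'a) \<Rightarrow> 'a \<Rightarrow> 'a" where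
  "glue f = case_prod f \<circ> inv p"

lemma slice_glue [simp]: "slice (glue f) i = f i"
  using bij_p by (auto simp: slice_def glue_def bij_is_inj)

lemma inj_slice_index: "inj (p \<circ> Pair i)"
  by (intro inj_compose bij_is_inj[OF bij_p]) (simp add: inj_def)

definition tag :: "('a \<Rightarrow> 'a) \<Rightarrow> 'a" where
  "tag \<xi> = slice \<xi> a0 a0"

text \<open>Tag a0 codes a complement, tag a1 a union over the slices of slice a1, and any other
  tag the basic open set with domain marked by the value a1 in slice a1 and values slice a2.\<close>

definition step ::
    "('a set \<Rightarrow> (('a \<Rightarrow> 'a) \<times> ('a \<Rightarrow> 'a)) set) \<Rightarrow> 'a set \<Rightarrow> (('a \<Rightarrow> 'a) \<times> ('a \<Rightarrow> 'a)) set"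
  where
  "step U c = (let L = liminf_on W (underS W c) U in
     {(\<eta>, \<xi>). if tag \<xi> = a0 then (\<eta>, slice \<xi> a1) \<notin> L
              else if tag \<xi> = a1 then (\<exists>i. (\<eta>, slice (slice \<xi> a1) i) \<in> L)
              else (\<forall>x. slice \<xi> a1 x = a1 \<longrightarrow> \<eta> x = slice \<xi> a2 x)})"

definition stage :: "'a set \<Rightarrow> (('a \<Rightarrow> 'a) \<times> ('a \<Rightarrow> 'a)) set" where
  "stage = wo_rel.worec W step"

lemma stage_step: "stage c = step stage c"
proof -
  have "wo_rel.adm_wo W step"
    unfolding wo_rel.adm_wo_def[OF wo_rel_W]
  proof (intro allI impI)
    fix f g :: "'a set \<Rightarrow> (('a \<Rightarrow> 'a) \<times> ('a \<Rightarrow> 'a)) set" and c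
    assume "\<forall>d\<in>underS W c. f d = g d"
    then have "liminf_on W (underS W c) f = liminf_on W (underS W c) g"
      by (intro liminf_on_cong) blast
    then show "step f c = step g c" by (simp add: step_def)
  qed
  then show ?thesis
    unfolding stage_def by (rule fun_cong[OF wo_rel.worec_fixpoint[OF wo_rel_W]])
qed

lemma step_borel:
  assumes "\<And>d. d \<in> underS W c \<Longrightarrow> U d \<in> borel2"
  shows "step U c \<in> borel2"
proof -
  let ?L = "liminf_on W (underS W c) U"
  let ?sub = "\<lambda>m. map_prod id (\<lambda>\<xi>. \<xi> \<circ> m) -` ?L"
  let ?tag = "\<lambda>v. UNIV \<times> {\<xi>. \<xi> (p (a0, a0)) = v}"
  let ?compl = "- ?sub (p \<circ> Pair a1)"
  let ?union = "\<Union>i. ?sub ((p \<circ> Pair a1) \<circ> (p \<circ> Pair i))"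
  let ?basic = "\<Inter>x. - (UNIV \<times> {\<xi>. \<xi> (p (a1, x)) = a1}) \<union>
                  (\<Union>v. {\<eta>. \<eta> x = v} \<times> {\<xi>. \<xi> (p (a2, x)) = v})"
  have "underS W c \<subseteq> Field W" by (auto dest: underS_Field)
  then have L: "?L \<in> borel2" by (rule liminf_on_borel_gen[OF card_of_subset_Field_W assms])
  have basic: "U \<times> V \<in> borel2" if "U \<in> basic_opens r" "V \<in> basic_opens r" for U V
    using that by (auto intro!: borel_gen.basic simp: basic_opens2_def)
  have tag: "?tag v \<in> borel2" for v
    by (intro basic basic_opens_UNIV basic_opens_point Cinfinite_r)
  have compl: "?compl \<in> borel2"
    by (intro borel_gen.compl borel_gen_vimage_comp_snd inj_slice_index L)
  have union: "?union \<in> borel2"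
    by (intro borel_gen_UN card_of_UNIV_W borel_gen_vimage_comp_snd inj_compose
        inj_slice_index L)
  have basic_set: "?basic \<in> borel2"
    by (intro borel_gen_INT borel_gen_UN borel_gen_Un Cinfinite_W card_of_UNIV_W
        borel_gen.compl basic basic_opens_UNIV basic_opens_point Cinfinite_r)
  have eq: "step U c = (?tag a0 \<inter> ?compl) \<union> (- ?tag a0 \<inter> ?tag a1 \<inter> ?union)
      \<union> (- ?tag a0 \<inter> - ?tag a1 \<inter> ?basic)"
  proof (rule set_eqI)
    fix z :: "('a \<Rightarrow> 'a) \<times> ('a \<Rightarrow> 'a)"
    obtain \<eta> \<xi> where z: "z = (\<eta>, \<xi>)" by fastforce
    show "z \<in> step U c \<longleftrightarrow> z \<in> (?tag a0 \<inter> ?compl) \<union> (- ?tag a0 \<inter> ?tag a1 \<inter> ?union)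
      \<union> (- ?tag a0 \<inter> - ?tag a1 \<inter> ?basic)"
      unfolding z using distinct by (auto simp: step_def Let_def tag_def slice_def comp_assoc)
  qed
  show ?thesis
    unfolding eq
    by (intro borel_gen_Un borel_gen_Int borel_gen.compl Cinfinite_W tag compl union basic_set)
qed

lemma stage_borel: "c \<in> Field W \<Longrightarrow> stage c \<in> borel2"
proof (induction c rule: wo_rel.well_order_induct[OF wo_rel_W])
  case (1 c)
  have "stage d \<in> borel2" if "d \<in> underS W c" for d
    using 1 that underS_Field[OF that] by (auto simp: underS_def)
  then show ?case by (subst stage_step) (rule step_borel)
qed

definition compl_code :: "('a \<Rightarrow> 'a) \<Rightarrow> 'a \<Rightarrow> 'a" where
  "compl_code \<zeta> = glue (\<lambda>i. if i = a0 then (\<lambda>_. a0) else \<zeta>)"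

definition union_code :: "('a \<Rightarrow> 'a \<Rightarrow> 'a) \<Rightarrow> 'a \<Rightarrow> 'a" where
  "union_code zs = glue (\<lambda>i. if i = a0 then (\<lambda>_. a1) else glue zs)"

definition basic_code :: "'a set \<Rightarrow> ('a \<Rightarrow> 'a) \<Rightarrow> 'a \<Rightarrow> 'a" where
  "basic_code X \<eta>0 = glue (\<lambda>i. if i = a0 then (\<lambda>_. a2)
     else if i = a1 then (\<lambda>x. if x \<in> X then a1 else a0) else \<eta>0)"

lemma stage_compl_code:
  "(\<eta>, compl_code \<zeta>) \<in> stage c \<longleftrightarrow> (\<eta>, \<zeta>) \<notin> liminf_on W (underS W c) stage"
  using distinct by (subst stage_step) (simp add: step_def Let_def tag_def compl_code_def)

lemma stage_union_code:
  "(\<eta>, union_code zs) \<in> stage c \<longleftrightarrow> (\<exists>i. (\<eta>, zs i) \<in> liminf_on W (underS W c) stage)"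
  using distinct by (subst stage_step) (simp add: step_def Let_def tag_def union_code_def)

lemma stage_basic_code: "(\<eta>, basic_code X \<eta>0) \<in> stage c \<longleftrightarrow> (\<forall>x\<in>X. \<eta> x = \<eta>0 x)"
  using distinct by (subst stage_step) (auto simp: step_def Let_def tag_def basic_code_def)

definition codes_from :: "'a set \<Rightarrow> ('a \<Rightarrow> 'a) \<Rightarrow> ('a \<Rightarrow> 'a) set \<Rightarrow> bool" where
  "codes_from b \<xi> A \<longleftrightarrow> (\<forall>c\<in>Field W. (b, c) \<in> W \<longrightarrow> (\<forall>\<eta>. (\<eta>, \<xi>) \<in> stage c \<longleftrightarrow> \<eta> \<in> A))"

definition coded :: "('a \<Rightarrow> 'a) set \<Rightarrow> bool" where
  "coded A \<longleftrightarrow> (\<exists>\<xi>. \<exists>b\<in>Field W. codes_from b \<xi> A)"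

lemma liminf_stage_codes_from:
  assumes "codes_from b \<xi> A" and "b \<in> underS W c"
  shows "(\<eta>, \<xi>) \<in> liminf_on W (underS W c) stage \<longleftrightarrow> \<eta> \<in> A"
  using Well_order_W _ assms(2)
proof (rule mem_liminf_on_iff_eventually_const)
  show "underS W c \<subseteq> Field W" by (auto dest: underS_Field)
  show "(\<eta>, \<xi>) \<in> stage d \<longleftrightarrow> \<eta> \<in> A" if "d \<in> underS W c" "(b, d) \<in> W" for d
    using assms(1) that underS_Field[OF that(1)] by (simp add: codes_from_def)
qed

lemma coded_basic: "coded {\<zeta>. \<forall>x\<in>X. \<zeta> x = \<eta>0 x}"
proof -
  have "Field W \<noteq> {}" using Cinfinite_W by (auto simp: cinfinite_def)
  then obtain b where "b \<in> Field W" by blast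
  moreover have "codes_from b (basic_code X \<eta>0) {\<zeta>. \<forall>x\<in>X. \<zeta> x = \<eta>0 x}"
    by (simp add: codes_from_def stage_basic_code)
  ultimately show ?thesis unfolding coded_def by blast
qed

lemma coded_Compl:
  assumes "coded A"
  shows "coded (- A)"
proof -
  obtain \<zeta> b where b: "b \<in> Field W" and \<zeta>: "codes_from b \<zeta> A"
    using assms by (auto simp: coded_def)
  have "|{b}| \<le>o r"
    using finite_card_of_ordLess_Cinfinite[OF Cinfinite_r] ordLess_imp_ordLeq by blast
  then obtain b' where b': "b' \<in> Field W" "b \<in> underS W b'"
    using cardSuc_strict_upper_bound[OF Cinfinite_r, of "{b}"] b by blast
  have "(\<eta>, compl_code \<zeta>) \<in> stage c \<longleftrightarrow> \<eta> \<in> - A" if "(b', c) \<in> W" for c \<eta>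
  proof -
    have "b \<in> underS W c" using b'(2) underS_W_mono[OF that] by blast
    then show ?thesis by (simp add: stage_compl_code liminf_stage_codes_from[OF \<zeta>])
  qed
  then show ?thesis unfolding coded_def codes_from_def using b'(1) by blast
qed

lemma coded_UN:
  assumes "\<And>i :: 'a. coded (A i)"
  shows "coded (\<Union>i. A i)"
proof -
  have "\<forall>i. \<exists>\<xi>. \<exists>b\<in>Field W. codes_from b \<xi> (A i)"
    using assms by (simp add: coded_def)
  from choice[OF this] obtain zs where "\<forall>i. \<exists>b. b \<in> Field W \<and> codes_from b (zs i) (A i)"
    by blast
  from choice[OF this] obtain bs
    where bs: "\<And>i. bs i \<in> Field W" and zs: "\<And>i. codes_from (bs i) (zs i) (A i)"
    by blast
  have "|range bs| \<le>o r"
    using card_of_image ordLeq_ordIso_trans card_of_UNIV_ordIso_r by blast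
  then obtain b' where b': "b' \<in> Field W" "range bs \<subseteq> underS W b'"
    using cardSuc_strict_upper_bound[OF Cinfinite_r, of "range bs"] bs by blast
  have "(\<eta>, union_code zs) \<in> stage c \<longleftrightarrow> \<eta> \<in> (\<Union>i. A i)" if "(b', c) \<in> W" for c \<eta>
  proof -
    have "bs i \<in> underS W c" for i using b'(2) underS_W_mono[OF that] by blast
    then show ?thesis by (simp add: stage_union_code liminf_stage_codes_from[OF zs])
  qed
  then show ?thesis unfolding coded_def codes_from_def using b'(1) by blast
qed

lemma coded_Union:
  assumes "|F| \<le>o r" and "\<And>A. A \<in> F \<Longrightarrow> coded A"
  shows "coded (\<Union>F)"
proof (cases "F = {}")
  case True
  have "coded (- UNIV)" using coded_Compl[OF coded_basic[of "{}"]] by simp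
  with True show ?thesis by simp
next
  case False
  have "|F| \<le>o |UNIV :: 'a set|"
    using assms(1) card_of_UNIV_ordIso_r ordIso_symmetric ordLeq_ordIso_trans by blast
  then obtain g :: "'a \<Rightarrow> ('a \<Rightarrow> 'a) set" where "F = range g"
    using card_of_ordLeq2[OF False] by metis
  then show ?thesis using assms(2) coded_UN by simp
qed

lemma coded_borel: "A \<in> borel_gen (basic_opens r) r \<Longrightarrow> coded A"
proof (induction rule: borel_gen.induct)
  case (basic A)
  then show ?case
    using coded_Compl[OF coded_basic[of "{}"]] coded_basic by (auto simp: basic_opens_def)
next
  case (compl A)
  from compl.IH show ?case by (rule coded_Compl)
next
  case (union F)
  then show ?case by (auto intro: coded_Union)
next
  case (inter F)
  have eq: "\<Inter>F = - \<Union>(uminus ` F)" by blast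
  have "coded (\<Union>(uminus ` F))"
  proof (rule coded_Union)
    show "|uminus ` F| \<le>o r" using inter(2) card_of_image ordLeq_transitive by blast
    show "coded B" if "B \<in> uminus ` F" for B using that inter.IH coded_Compl by blast
  qed
  then show ?case unfolding eq by (rule coded_Compl)
qed

definition universal :: "(('a \<Rightarrow> 'a) \<times> ('a \<Rightarrow> 'a)) set" where
  "universal = liminf_on W (Field W) stage"

lemma universal_borel: "universal \<in> borel2"
  unfolding universal_def
  by (intro liminf_on_borel_gen card_of_subset_Field_W stage_borel) simp_all

lemma universal_section:
  assumes "coded A"
  shows "\<exists>\<xi>. \<forall>\<eta>. \<eta> \<in> A \<longleftrightarrow> (\<eta>, \<xi>) \<in> universal"
proof -
  obtain \<xi> b where "b \<in> Field W" and "codes_from b \<xi> A"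
    using assms by (auto simp: coded_def)
  then have "(\<eta>, \<xi>) \<in> universal \<longleftrightarrow> \<eta> \<in> A" for \<eta>
    unfolding universal_def
    by (intro mem_liminf_on_iff_eventually_const[OF Well_order_W]) (auto simp: codes_from_def)
  then show ?thesis by blast
qed

end

theorem theorem3p18:
  fixes r :: "'a rel"
  assumes "Card_order r" and "Field r = UNIV" and "infinite (UNIV :: 'a set)"
    and "regularCard r"
  shows "\<exists>R. R \<in> borel_gen (basic_opens2 r) (cardSuc r) \<and>
           (\<forall>A \<in> borel_gen (basic_opens r) r.
              \<exists>\<xi>::'a \<Rightarrow> 'a. \<forall>\<eta>::'a \<Rightarrow> 'a. \<eta> \<in> A \<longleftrightarrow> (\<eta>, \<xi>) \<in> R)"
proof -
  have "|UNIV \<times> UNIV :: ('a \<times> 'a) set| =o |UNIV :: 'a set|"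
    by (rule card_of_Times_same_infinite[OF assms(3)])
  then obtain p :: "'a \<times> 'a \<Rightarrow> 'a" where p: "bij p"
    using card_of_ordIso[of "UNIV :: ('a \<times> 'a) set" "UNIV :: 'a set"] by auto
  obtain B :: "'a set" where "card B = 3"
    using infinite_arbitrarily_large[OF assms(3)] by blast
  then obtain a0 a1 a2 :: 'a where "a0 \<noteq> a1" "a1 \<noteq> a2" "a0 \<noteq> a2"
    unfolding card_3_iff by auto
  with p interpret borel_code r p a0 a1 a2
    using assms(1-3) by unfold_locales (simp_all add: cinfinite_def)
  show ?thesis
  proof (intro exI[of _ universal] conjI ballI)
    show "universal \<in> borel_gen (basic_opens2 r) (cardSuc r)" by (rule universal_borel)
    show "\<exists>\<xi>. \<forall>\<eta>. \<eta> \<in> A \<longleftrightarrow> (\<eta>, \<xi>) \<in> universal" if "A \<in> borel_gen (basic_opens r) r" for A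
      using that by (intro universal_section coded_borel)
  qed
qed

end
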